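(* Let $\mathcal{S}$ and $\mathcal{S}'$ be square-free staged trees that are statistically equivalent via a bijection $\varphi:\Lambda(\mathcal{S})\to\Lambda(\mathcal{S}')$ between their sets of root-to-leaf paths. Let $\alpha>0$, let $\mathcal{D}=(N_\lambda)_{\lambda\in\Lambda(\mathcal{S})}$ be a complete data sample on $\mathcal{S}$, and let $\mathcal{D}'$ be the corresponding sample on $\mathcal{S}'$, given by $N'_{\varphi(\lambda)}=N_\lambda$. Then $\mathrm{BDepu}(\mathcal{S},\mathcal{D};\alpha)=\mathrm{BDepu}(\mathcal{S}',\mathcal{D}';\alpha)$.
   Context: An event tree is a finite directed rooted tree whose edges are directed away from the root; nodes with no outgoing edges are leaves, all other nodes are situations. A staged tree $\mathcal{S}$ is an event tree together with a partition of its situations into stages $u_1,\dots,u_J$ such that all situations in $u_j$ have the same number $r_j$ of outgoing edges, these being labelled $1,\dots,r_j$ at each situation of $u_j$; the $k$-th edge of every situation in $u_j$ carries the same conditional transition probability $\theta_{jk}$. The staged tree model is the set of probability distributions on the set $\Lambda(\mathcal{S})$ of root-to-leaf paths obtained by choosing for each stage a probability vector $(\theta_{j1},\dots,\theta_{jr_j})$ (positive entries summing to 1) and giving each path the product of the probabilities on its edges. A staged tree is square-free if no two situations on the same root-to-leaf path lie in the same stage. Two staged trees $\mathcal{S},\mathcal{S}'$ are statistically equivalent via a bijection $\varphi:\Lambda(\mathcal{S})\to\Lambda(\mathcal{S}')$ if the model of $\mathcal{S}$ equals $\{p\circ\varphi : p \text{ in the model of } \mathcal{S}'\}$, i.e.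 they represent the same set of distributions. A complete data sample $\mathcal{D}$ assigns to each root-to-leaf path $\lambda$ a number $N_\lambda\ge 0$ of units that traversed it. For stage $u_j$, $n_{jk}$ is the total number of units whose path passes through the $k$-th outgoing edge of some situation in $u_j$, and $\overline{n}_j=\sum_{k=1}^{r_j}n_{jk}$. Given hyperparameters $\alpha_{jk}>0$ with $\overline{\alpha}_j=\sum_{k=1}^{r_j}\alpha_{jk}$, the BD-metric is $$\mathrm{BD}(\mathcal{S},\mathcal{D};\boldsymbol{\alpha})=\prod_{j=1}^{J}\left[\frac{\Gamma(\overline{\alpha}_j)}{\Gamma(\overline{\alpha}_j+\overline{n}_j)}\prod_{k=1}^{r_j}\frac{\Gamma(\alpha_{jk}+n_{jk})}{\Gamma(\alpha_{jk})}\right].$$ For an edge $e$, $\Lambda(e)$ denotes the set of root-to-leaf paths containing $e$. For an imaginary sample size $\alpha>0$, the BDepu score $\mathrm{BDepu}(\mathcal{S},\mathcal{D};\alpha)$ is the BD-metric with $$\alpha_{jk}=\frac{\alpha}{|\Lambda(\mathcal{S})|}\sum_{m=1}^{h_j}|\Lambda(e^m_{jk})|,$$ where $h_j$ is the number of situations in $u_j$ and $e^m_{jk}$ is the $k$-th outgoing edge of the $m$-th situation of $u_j$. *)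

theory Defs
  imports "HOL-Analysis.Analysis" "HOL-Library.Sublist"
begin

text \<open>An ordered event tree is encoded as a finite prefix-closed set of nat lists:
  the node v has children v@[0], ..., v@[m-1]; the k-th outgoing edge of v
  (k = 0, 1, ... corresponding to the labels 1, 2, ... of the paper) leads to v@[k].
  Root-to-leaf paths are identified with leaves.\<close>

definition event_tree :: "nat list set \<Rightarrow> bool" where
  "event_tree T \<longleftrightarrow> finite T \<and> [] \<in> T \<and>
     (\<forall>v k. v @ [k] \<in> T \<longrightarrow> v \<in> T) \<and>
     (\<forall>v j k. v @ [k] \<in> T \<and> j < k \<longrightarrow> v @ [j] \<in> T)"

definition situations :: "nat list set \<Rightarrow> nat list set" where
  "situations T = {v \<in> T. v @ [0] \<in> T}"

definition leaves :: "nat list set \<Rightarrow> nat list set" where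
  "leaves T = {v \<in> T. v @ [0] \<notin> T}"

definition nchildren :: "nat list set \<Rightarrow> nat list \<Rightarrow> nat" where
  "nchildren T v = card {k. v @ [k] \<in> T}"

definition staged_tree :: "nat list set \<Rightarrow> (nat list \<Rightarrow> 'a) \<Rightarrow> bool" where
  "staged_tree T st \<longleftrightarrow> event_tree T \<and>
     (\<forall>u \<in> situations T. \<forall>v \<in> situations T. st u = st v \<longrightarrow> nchildren T u = nchildren T v)"

definition stages :: "nat list set \<Rightarrow> (nat list \<Rightarrow> 'a) \<Rightarrow> 'a set" where
  "stages T st = st ` situations T"

definition stage :: "nat list set \<Rightarrow> (nat list \<Rightarrow> 'a) \<Rightarrow> 'a \<Rightarrow> nat list set" where
  "stage T st j = {v \<in> situations T. st v = j}"

definition stage_deg :: "nat list set \<Rightarrow> (nat list \<Rightarrow> 'a) \<Rightarrow> 'a \<Rightarrow> nat" where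
  "stage_deg T st j = nchildren T (SOME v. v \<in> stage T st j)"

definition square_free :: "nat list set \<Rightarrow> (nat list \<Rightarrow> 'a) \<Rightarrow> bool" where
  "square_free T st \<longleftrightarrow>
     (\<forall>u \<in> situations T. \<forall>v \<in> situations T. strict_prefix u v \<longrightarrow> st u \<noteq> st v)"

definition path_prob :: "(nat list \<Rightarrow> 'a) \<Rightarrow> ('a \<Rightarrow> nat \<Rightarrow> real) \<Rightarrow> nat list \<Rightarrow> real" where
  "path_prob st \<theta> l = (\<Prod>i < length l. \<theta> (st (take i l)) (l ! i))"

definition valid_params :: "nat list set \<Rightarrow> (nat list \<Rightarrow> 'a) \<Rightarrow> ('a \<Rightarrow> nat \<Rightarrow> real) \<Rightarrow> bool" where
  "valid_params T st \<theta> \<longleftrightarrow> (\<forall>j \<in> stages T st.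
      (\<forall>k < stage_deg T st j. \<theta> j k > 0) \<and> (\<Sum>k < stage_deg T st j. \<theta> j k) = 1)"

definition model :: "nat list set \<Rightarrow> (nat list \<Rightarrow> 'a) \<Rightarrow> (nat list \<Rightarrow> real) set" where
  "model T st = {restrict (path_prob st \<theta>) (leaves T) | \<theta>. valid_params T st \<theta>}"

definition stat_equiv ::
  "nat list set \<Rightarrow> (nat list \<Rightarrow> 'a) \<Rightarrow> nat list set \<Rightarrow> (nat list \<Rightarrow> 'b) \<Rightarrow> (nat list \<Rightarrow> nat list) \<Rightarrow> bool" where
  "stat_equiv T st T' st' \<phi> \<longleftrightarrow> bij_betw \<phi> (leaves T) (leaves T') \<and>
     model T st = (\<lambda>q. restrict (q \<circ> \<phi>) (leaves T)) ` model T' st'"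

definition edge_paths :: "nat list set \<Rightarrow> nat list \<Rightarrow> nat \<Rightarrow> nat list set" where
  "edge_paths T v k = {l \<in> leaves T. prefix (v @ [k]) l}"

definition count_n :: "nat list set \<Rightarrow> (nat list \<Rightarrow> 'a) \<Rightarrow> (nat list \<Rightarrow> nat) \<Rightarrow> 'a \<Rightarrow> nat \<Rightarrow> nat" where
  "count_n T st N j k = (\<Sum>l \<in> leaves T.
       if (\<exists>v \<in> stage T st j. prefix (v @ [k]) l) then N l else 0)"

definition BD :: "nat list set \<Rightarrow> (nat list \<Rightarrow> 'a) \<Rightarrow> (nat list \<Rightarrow> nat) \<Rightarrow> ('a \<Rightarrow> nat \<Rightarrow> real) \<Rightarrow> real" where
  "BD T st N a = (\<Prod>j \<in> stages T st.
      let r = stage_deg T st j;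
          abar = (\<Sum>k < r. a j k);
          nbar = real (\<Sum>k < r. count_n T st N j k)
      in Gamma abar / Gamma (abar + nbar) *
         (\<Prod>k < r. Gamma (a j k + real (count_n T st N j k)) / Gamma (a j k)))"

definition BDepu_alpha :: "nat list set \<Rightarrow> (nat list \<Rightarrow> 'a) \<Rightarrow> real \<Rightarrow> 'a \<Rightarrow> nat \<Rightarrow> real" where
  "BDepu_alpha T st \<alpha> j k = \<alpha> / real (card (leaves T)) *
      real (\<Sum>v \<in> stage T st j. card (edge_paths T v k))"

definition BDepu :: "nat list set \<Rightarrow> (nat list \<Rightarrow> 'a) \<Rightarrow> (nat list \<Rightarrow> nat) \<Rightarrow> real \<Rightarrow> real" where
  "BDepu T st N \<alpha> = BD T st N (BDepu_alpha T st \<alpha>)"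

end

theory Submission
  imports Defs
begin

(* Adding one unit on a path multiplies the BD score by the Dirichlet posterior predictive
   probability of that path, a path probability with parameters (alpha_jk + n_jk)/(alpha_j + n_j).
   With the BDepu hyperparameters, alpha_jk + n_jk is the total weight of the paths through the
   stage edge (j,k) when every path carries the weight alpha/|Lambda| + N_lambda; hence the
   predictive distribution is the maximum likelihood estimate of the staged tree model for these
   positive weights. Square-freeness makes the weighted log-likelihood separate over the stages,
   so by Gibbs' inequality this estimate is the unique maximiser over the model. Statistically
   equivalent trees have the same model up to the bijection of paths, so their maximisers, and
   with them the predictive factors, correspond; induction on the sample size finishes the proof. *)

lemma gibbs_gap:
  fixes w \<theta> :: "'k \<Rightarrow> real"
  assumes K: "finite K" and w: "\<forall>k\<in>K. w k > 0" and \<theta>: "\<forall>k\<in>K. \<theta> k > 0"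
    and \<theta>_sum: "(\<Sum>k\<in>K. \<theta> k) = 1"
  defines "W \<equiv> \<Sum>k\<in>K. w k"
  shows "(\<Sum>k\<in>K. w k * ln (w k / W)) - (\<Sum>k\<in>K. w k * ln (\<theta> k))
    = (\<Sum>k\<in>K. w k * (\<theta> k * W / w k - 1 - ln (\<theta> k * W / w k)))"
proof -
  define x where "x k = \<theta> k * W / w k" for k
  have "K \<noteq> {}" using \<theta>_sum by auto
  then have W: "W > 0" unfolding W_def using K w by (intro sum_pos) auto
  have summand: "w k * ln (w k / W) - w k * ln (\<theta> k) = w k * (x k - 1 - ln (x k)) - (\<theta> k * W - w k)"
    if "k \<in> K" for k
  proof -
    have pos: "w k > 0" "\<theta> k > 0" using w \<theta> that by auto
    then have "ln (x k) = ln (\<theta> k) + ln W - ln (w k)"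
      using W by (simp add: x_def ln_div ln_mult)
    moreover have "ln (w k / W) = ln (w k) - ln W" using pos W by (simp add: ln_div)
    ultimately have "w k * (ln (w k / W) - ln (\<theta> k)) = w k * - ln (x k)" by simp
    moreover have "w k * x k = \<theta> k * W" using pos by (simp add: x_def)
    ultimately show ?thesis by (simp add: algebra_simps)
  qed
  have "(\<Sum>k\<in>K. \<theta> k * W) = W" using sum_distrib_right[of \<theta> K W] \<theta>_sum by simp
  then have balance: "(\<Sum>k\<in>K. \<theta> k * W - w k) = 0" by (simp add: sum_subtractf W_def)
  have "(\<Sum>k\<in>K. w k * ln (w k / W)) - (\<Sum>k\<in>K. w k * ln (\<theta> k))
      = (\<Sum>k\<in>K. w k * (x k - 1 - ln (x k)) - (\<theta> k * W - w k))"
    unfolding sum_subtractf[symmetric] by (rule sum.cong) (simp_all add: summand)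
  also have "\<dots> = (\<Sum>k\<in>K. w k * (x k - 1 - ln (x k))) - (\<Sum>k\<in>K. \<theta> k * W - w k)"
    by (rule sum_subtractf)
  finally show ?thesis using balance by (simp add: x_def)
qed

lemma gibbs_inequality:
  fixes w \<theta> :: "'k \<Rightarrow> real"
  assumes K: "finite K" and w: "\<forall>k\<in>K. w k > 0" and \<theta>: "\<forall>k\<in>K. \<theta> k > 0"
    and \<theta>_sum: "(\<Sum>k\<in>K. \<theta> k) = 1"
  defines "W \<equiv> \<Sum>k\<in>K. w k"
  shows "(\<Sum>k\<in>K. w k * ln (\<theta> k)) \<le> (\<Sum>k\<in>K. w k * ln (w k / W))"
    and "(\<Sum>k\<in>K. w k * ln (w k / W)) \<le> (\<Sum>k\<in>K. w k * ln (\<theta> k)) \<Longrightarrow> \<forall>k\<in>K. \<theta> k = w k / W"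
proof -
  define x where "x k = \<theta> k * W / w k" for k
  have gap: "(\<Sum>k\<in>K. w k * ln (w k / W)) - (\<Sum>k\<in>K. w k * ln (\<theta> k))
      = (\<Sum>k\<in>K. w k * (x k - 1 - ln (x k)))"
    unfolding W_def x_def using gibbs_gap[OF K w \<theta> \<theta>_sum] by simp
  have "K \<noteq> {}" using \<theta>_sum by auto
  then have W: "W > 0" unfolding W_def using K w by (intro sum_pos) auto
  have x: "x k > 0" if "k \<in> K" for k using w \<theta> W that by (simp add: x_def)
  have nonneg: "0 \<le> w k * (x k - 1 - ln (x k))" if "k \<in> K" for k
    using w that ln_le_minus_one[OF x[OF that]] by (intro mult_nonneg_nonneg) auto
  then have "0 \<le> (\<Sum>k\<in>K. w k * (x k - 1 - ln (x k)))" by (rule sum_nonneg)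
  then show "(\<Sum>k\<in>K. w k * ln (\<theta> k)) \<le> (\<Sum>k\<in>K. w k * ln (w k / W))"
    unfolding gap[symmetric] by simp
  assume "(\<Sum>k\<in>K. w k * ln (w k / W)) \<le> (\<Sum>k\<in>K. w k * ln (\<theta> k))"
  then have "(\<Sum>k\<in>K. w k * (x k - 1 - ln (x k))) = 0"
    using \<open>0 \<le> (\<Sum>k\<in>K. w k * (x k - 1 - ln (x k)))\<close> unfolding gap[symmetric] by simp
  then have zero: "\<forall>k\<in>K. w k * (x k - 1 - ln (x k)) = 0"
    using sum_nonneg_eq_0_iff[OF K nonneg] by simp
  show "\<forall>k\<in>K. \<theta> k = w k / W"
  proof
    fix k assume k: "k \<in> K"
    have "w k > 0" using w k by blast
    moreover have "w k * (x k - 1 - ln (x k)) = 0" using zero k by blast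
    ultimately have "ln (x k) = x k - 1" by simp
    then have "x k = 1" by (rule ln_eq_minus_one[OF x[OF k]])
    then show "\<theta> k = w k / W" using \<open>w k > 0\<close> W unfolding x_def by (simp add: field_simps)
  qed
qed

definition log_likelihood :: "'l set \<Rightarrow> ('l \<Rightarrow> real) \<Rightarrow> ('l \<Rightarrow> real) \<Rightarrow> real" where
  "log_likelihood L c p = (\<Sum>l\<in>L. c l * ln (p l))"

lemma log_likelihood_reindex:
  assumes "bij_betw \<phi> L L'" and "\<forall>l\<in>L. c' (\<phi> l) = c l"
  shows "log_likelihood L c (restrict (p \<circ> \<phi>) L) = log_likelihood L' c' p"
proof -
  have "log_likelihood L c (restrict (p \<circ> \<phi>) L) = (\<Sum>l\<in>L. c' (\<phi> l) * ln (p (\<phi> l)))"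
    unfolding log_likelihood_def using assms(2) by (intro sum.cong) auto
  also have "\<dots> = log_likelihood L' c' p"
    unfolding log_likelihood_def using assms(1) by (rule sum.reindex_bij_betw)
  finally show ?thesis .
qed

definition dirichlet_marginal :: "'k set \<Rightarrow> ('k \<Rightarrow> real) \<Rightarrow> ('k \<Rightarrow> nat) \<Rightarrow> real" where
  "dirichlet_marginal K a n = Gamma (\<Sum>k\<in>K. a k) / Gamma ((\<Sum>k\<in>K. a k) + real (\<Sum>k\<in>K. n k)) *
     (\<Prod>k\<in>K. Gamma (a k + real (n k)) / Gamma (a k))"

lemma dirichlet_marginal_zero:
  assumes "finite K" "K \<noteq> {}" "\<forall>k\<in>K. a k > 0"
  shows "dirichlet_marginal K a (\<lambda>_. 0) = 1"
proof -
  have "(\<Sum>k\<in>K. a k) > 0" using assms by (intro sum_pos) auto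
  then have "Gamma (\<Sum>k\<in>K. a k) > 0" by simp
  moreover have "(\<Prod>k\<in>K. Gamma (a k + real 0) / Gamma (a k)) = 1"
    using assms(3) by (intro prod.neutral) (simp add: less_imp_neq[OF Gamma_real_pos, symmetric])
  ultimately show ?thesis by (simp add: dirichlet_marginal_def)
qed

lemma dirichlet_marginal_increment:
  assumes K: "finite K" and k0: "k0 \<in> K" and a: "\<forall>k\<in>K. a k > 0"
  shows "dirichlet_marginal K a (n(k0 := Suc (n k0))) =
    dirichlet_marginal K a n * ((a k0 + real (n k0)) / ((\<Sum>k\<in>K. a k) + real (\<Sum>k\<in>K. n k)))"
proof -
  define A where "A = (\<Sum>k\<in>K. a k) + real (\<Sum>k\<in>K. n k)"
  have "(\<Sum>k\<in>K. a k) > 0" using K k0 a by (intro sum_pos) auto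
  then have A: "A > 0" unfolding A_def by (simp add: add_pos_nonneg sum_nonneg)
  have Gamma_succ: "Gamma (x + 1) = x * Gamma x" if "x > 0" for x :: real
    using that by (intro Gamma_plus1) (auto dest: nonpos_Ints_nonpos)
  have "(\<Sum>k\<in>K. (n(k0 := Suc (n k0))) k) = (\<Sum>k\<in>K. n k) + 1"
    using K k0 by (simp add: sum.remove)
  then have "(\<Sum>k\<in>K. a k) + real (\<Sum>k\<in>K. (n(k0 := Suc (n k0))) k) = A + 1"
    by (simp add: A_def)
  then have new_total: "Gamma ((\<Sum>k\<in>K. a k) + real (\<Sum>k\<in>K. (n(k0 := Suc (n k0))) k)) = A * Gamma A"
    using Gamma_succ[OF A] by simp
  have "(\<Prod>k\<in>K. Gamma (a k + real ((n(k0 := Suc (n k0))) k)) / Gamma (a k))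
      = Gamma (a k0 + real (n k0) + 1) / Gamma (a k0) * (\<Prod>k\<in>K - {k0}. Gamma (a k + real (n k)) / Gamma (a k))"
    using K k0 by (simp add: prod.remove ac_simps)
  also have "\<dots> = (a k0 + real (n k0)) * Gamma (a k0 + real (n k0)) / Gamma (a k0) *
      (\<Prod>k\<in>K - {k0}. Gamma (a k + real (n k)) / Gamma (a k))"
    using a k0 by (simp only: Gamma_succ add_pos_nonneg of_nat_0_le_iff)
  also have "\<dots> = (a k0 + real (n k0)) * (\<Prod>k\<in>K. Gamma (a k + real (n k)) / Gamma (a k))"
    using K k0 by (simp add: prod.remove)
  finally have new_prod: "(\<Prod>k\<in>K. Gamma (a k + real ((n(k0 := Suc (n k0))) k)) / Gamma (a k))
      = (a k0 + real (n k0)) * (\<Prod>k\<in>K. Gamma (a k + real (n k)) / Gamma (a k))" .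
  have "Gamma A > 0" using A by simp
  then show ?thesis
    unfolding dirichlet_marginal_def new_total new_prod A_def[symmetric] by (simp add: field_simps)
qed

lemma downward_closed_mem_iff_less_card:
  fixes S :: "nat set"
  assumes "finite S" and "\<And>m k. m \<in> S \<Longrightarrow> k < m \<Longrightarrow> k \<in> S"
  shows "k \<in> S \<longleftrightarrow> k < card S"
proof
  assume k: "k \<in> S"
  have "{..k} \<subseteq> S"
  proof
    fix m assume "m \<in> {..k}"
    then show "m \<in> S" using assms(2)[OF k, of m] k by (cases "m = k") auto
  qed
  then have "card {..k} \<le> card S" by (rule card_mono[OF assms(1)])
  then show "k < card S" by simp
next
  assume "k < card S"
  show "k \<in> S"
  proof (rule ccontr)
    assume "k \<notin> S"
    have "S \<subseteq> {..<k}"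
    proof
      fix m assume "m \<in> S"
      then show "m \<in> {..<k}" using assms(2)[of m k] \<open>k \<notin> S\<close> by (metis lessThan_iff linorder_neqE_nat)
    qed
    then have "card S \<le> card {..<k}" by (intro card_mono) auto
    then show False using \<open>k < card S\<close> by simp
  qed
qed

lemma nat_fun_increment_induct [consumes 1, case_names zero increment]:
  fixes N :: "'a \<Rightarrow> nat"
  assumes "finite L"
    and zero: "\<And>N. \<forall>l\<in>L. N l = 0 \<Longrightarrow> P N"
    and increment: "\<And>N l. l \<in> L \<Longrightarrow> P N \<Longrightarrow> P (N(l := Suc (N l)))"
  shows "P N"
proof (induction "\<Sum>l\<in>L. N l" arbitrary: N)
  case 0
  then show ?case using assms(1) zero by simp
next
  case (Suc s)
  have "\<exists>l\<in>L. N l > 0"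
  proof (rule ccontr)
    assume "\<not> (\<exists>l\<in>L. N l > 0)"
    then have "(\<Sum>l\<in>L. N l) = 0" by simp
    then show False using Suc.hyps(2) by simp
  qed
  then obtain l where l: "l \<in> L" "N l > 0" by blast
  define M where "M = N(l := N l - 1)"
  have "(\<Sum>l\<in>L. N l) = (\<Sum>l\<in>L. M l) + 1"
    using assms(1) l by (simp add: M_def sum.remove)
  then have "P M" using Suc by simp
  moreover have "N = M(l := Suc (M l))" using l by (auto simp: M_def)
  ultimately show ?case using increment[OF l(1), of M] by simp
qed

locale ordered_event_tree =
  fixes T :: "nat list set"
  assumes event_tree: "event_tree T"
begin

lemma finite_tree: "finite T"
  using event_tree by (simp add: event_tree_def)

lemma root_in_tree: "[] \<in> T"
  using event_tree by (simp add: event_tree_def)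

lemma parent_in_tree: "v @ [k] \<in> T \<Longrightarrow> v \<in> T"
  using event_tree unfolding event_tree_def by blast

lemma sibling_in_tree: "v @ [k] \<in> T \<Longrightarrow> j < k \<Longrightarrow> v @ [j] \<in> T"
  using event_tree unfolding event_tree_def by blast

lemma prefix_in_tree:
  assumes "prefix u v" "v \<in> T"
  shows "u \<in> T"
proof -
  obtain w where "v = u @ w" using assms(1) by (auto simp: prefix_def)
  with assms(2) show ?thesis
  proof (induction w arbitrary: v rule: rev_induct)
    case (snoc x w)
    then have "(u @ w) @ [x] \<in> T" by simp
    then have "u @ w \<in> T" by (rule parent_in_tree)
    then show ?case using snoc.IH by simp
  qed simp
qed

lemma child_in_tree_iff: "v @ [k] \<in> T \<longleftrightarrow> k < nchildren T v"
proof -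
  have "finite ((\<lambda>k. v @ [k]) -` T)" using finite_tree by (rule finite_vimageI) (simp add: inj_def)
  then have "finite {k. v @ [k] \<in> T}" by (simp add: vimage_def)
  moreover have "i \<in> {k. v @ [k] \<in> T}" if "m \<in> {k. v @ [k] \<in> T}" "i < m" for m i
    using sibling_in_tree that by blast
  ultimately show ?thesis
    unfolding nchildren_def using downward_closed_mem_iff_less_card[of "{k. v @ [k] \<in> T}" k] by blast
qed

lemma nchildren_pos: "v \<in> situations T \<Longrightarrow> 0 < nchildren T v"
  using child_in_tree_iff[of v 0] by (simp add: situations_def)

lemma take_in_situations:
  assumes "l \<in> T" "i < length l"
  shows "take i l \<in> situations T"
proof -
  have "take i l @ [l ! i] \<in> T"
    using assms prefix_in_tree[OF take_is_prefix] by (simp flip: take_Suc_conv_app_nth)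
  then have "take i l @ [0] \<in> T" by (simp add: child_in_tree_iff)
  then show "take i l \<in> situations T"
    using assms(1) prefix_in_tree[OF take_is_prefix] by (simp add: situations_def)
qed

lemma finite_leaves: "finite (leaves T)"
  using finite_tree by (simp add: leaves_def)

lemma leaf_extension:
  assumes "v \<in> T"
  obtains l where "l \<in> leaves T" "prefix v l"
proof -
  define E where "E = {w \<in> T. prefix v w}"
  have E: "finite E" "v \<in> E" using finite_tree assms by (auto simp: E_def)
  define m where "m = Max (length ` E)"
  have "m \<in> length ` E" unfolding m_def using E by (intro Max_in) auto
  then obtain l where l: "l \<in> E" "length l = m" by blast
  have "l @ [0] \<notin> T"
  proof
    assume "l @ [0] \<in> T"
    then have "l @ [0] \<in> E" using l(1) by (auto simp: E_def prefix_def)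
    then have "length (l @ [0]) \<in> length ` E" by (rule imageI)
    then have "length (l @ [0]) \<le> m" unfolding m_def using E(1) by (intro Max_ge) auto
    then show False using l(2) by simp
  qed
  then show ?thesis using that[of l] l(1) by (simp add: E_def leaves_def)
qed

lemma leaves_nonempty: "leaves T \<noteq> {}"
  using leaf_extension[OF root_in_tree] by blast

end

locale square_free_staged_tree =
  fixes T :: "nat list set" and st :: "nat list \<Rightarrow> 'a"
  assumes staged: "staged_tree T st" and square_free: "square_free T st"

sublocale square_free_staged_tree \<subseteq> ordered_event_tree T
  using staged by unfold_locales (simp add: staged_tree_def)

context square_free_staged_tree
begin

lemma stage_deg_eq:
  assumes v: "v \<in> situations T"
  shows "stage_deg T st (st v) = nchildren T v"
proof -
  define w where "w = (SOME w. w \<in> stage T st (st v))"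
  have "w \<in> stage T st (st v)" unfolding w_def by (rule someI[of _ v]) (simp add: stage_def v)
  then have "w \<in> situations T" "st w = st v" by (simp_all add: stage_def)
  then have "nchildren T w = nchildren T v" using staged v unfolding staged_tree_def by blast
  then show ?thesis unfolding stage_deg_def w_def[symmetric] .
qed

lemma stage_deg_pos: "j \<in> stages T st \<Longrightarrow> 0 < stage_deg T st j"
  by (auto simp: stages_def stage_deg_eq nchildren_pos)

lemma finite_stages: "finite (stages T st)"
  using finite_tree by (simp add: stages_def situations_def)

lemma finite_stage: "finite (stage T st j)"
  using finite_tree by (simp add: stage_def situations_def)

lemma stage_prefix_unique:
  assumes "v \<in> stage T st j" "w \<in> stage T st j" "prefix v l" "prefix w l"
  shows "v = w"
proof -
  have sit: "v \<in> situations T" "w \<in> situations T" "st v = st w"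
    using assms(1,2) by (auto simp: stage_def)
  then have "\<not> strict_prefix v w" "\<not> strict_prefix w v"
    using square_free unfolding square_free_def by metis+
  moreover have "prefix v w \<or> prefix w v" using assms(3,4) by (rule prefix_same_cases)
  ultimately show ?thesis by (auto simp: strict_prefix_def)
qed

definition stage_edge_paths :: "'a \<Rightarrow> nat \<Rightarrow> nat list set" where
  "stage_edge_paths j k = (\<Union>v\<in>stage T st j. edge_paths T v k)"

lemma stage_edge_paths_subset_leaves: "stage_edge_paths j k \<subseteq> leaves T"
  by (auto simp: stage_edge_paths_def edge_paths_def)

lemma finite_stage_edge_paths: "finite (stage_edge_paths j k)"
  using finite_leaves stage_edge_paths_subset_leaves by (rule finite_subset[rotated])

lemma stage_edge_paths_label_unique:
  assumes "l \<in> stage_edge_paths j k" "l \<in> stage_edge_paths j k'"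
  shows "k = k'"
proof -
  obtain v w where v: "v \<in> stage T st j" "prefix (v @ [k]) l"
    and w: "w \<in> stage T st j" "prefix (w @ [k']) l"
    using assms by (auto simp: stage_edge_paths_def edge_paths_def)
  have "prefix v l" "prefix w l" using v(2) w(2) by (auto dest: append_prefixD)
  then have "v = w" using v(1) w(1) by (intro stage_prefix_unique)
  then have "prefix (v @ [k]) (v @ [k']) \<or> prefix (v @ [k']) (v @ [k])"
    using prefix_same_cases[OF v(2)] w(2) by blast
  then show ?thesis by auto
qed

lemma card_stage_edge_paths:
  "card (stage_edge_paths j k) = (\<Sum>v\<in>stage T st j. card (edge_paths T v k))"
  unfolding stage_edge_paths_def
proof (rule card_UN_disjoint[OF finite_stage])
  show "\<forall>v\<in>stage T st j. finite (edge_paths T v k)"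
    using finite_leaves by (simp add: edge_paths_def)
  show "\<forall>v\<in>stage T st j. \<forall>w\<in>stage T st j. v \<noteq> w \<longrightarrow> edge_paths T v k \<inter> edge_paths T w k = {}"
  proof (intro ballI impI)
    fix v w assume vw: "v \<in> stage T st j" "w \<in> stage T st j" "v \<noteq> w"
    have False if "prefix (v @ [k]) l" "prefix (w @ [k]) l" for l
      using stage_prefix_unique[OF vw(1,2)] vw(3) that by (auto dest: append_prefixD)
    then show "edge_paths T v k \<inter> edge_paths T w k = {}" by (auto simp: edge_paths_def)
  qed
qed

lemma stage_edge_paths_label_less:
  assumes "l \<in> stage_edge_paths j k"
  shows "j \<in> stages T st" "k < stage_deg T st j"
proof -
  obtain v where v: "v \<in> situations T" "st v = j" "prefix (v @ [k]) l" "l \<in> T"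
    using assms by (auto simp: stage_edge_paths_def edge_paths_def stage_def leaves_def)
  then show "j \<in> stages T st" by (auto simp: stages_def)
  have "v @ [k] \<in> T" using v prefix_in_tree by blast
  then show "k < stage_deg T st j" using v(1) by (simp add: child_in_tree_iff stage_deg_eq flip: v(2))
qed

lemma stage_edge_paths_nonempty:
  assumes "j \<in> stages T st" "k < stage_deg T st j"
  shows "stage_edge_paths j k \<noteq> {}"
proof -
  obtain v where v: "v \<in> situations T" "j = st v" using assms(1) by (auto simp: stages_def)
  then have "v @ [k] \<in> T" using assms(2) by (simp add: child_in_tree_iff stage_deg_eq)
  then obtain l where "l \<in> leaves T" "prefix (v @ [k]) l" by (rule leaf_extension)
  then show ?thesis using v by (auto simp: stage_edge_paths_def edge_paths_def stage_def)
qed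

lemma stage_edges_of_leaf:
  assumes l: "l \<in> leaves T"
  shows "{(j, k). l \<in> stage_edge_paths j k} = (\<lambda>i. (st (take i l), l ! i)) ` {..<length l}"
proof (intro equalityI subsetI)
  fix e assume "e \<in> {(j, k). l \<in> stage_edge_paths j k}"
  then obtain j k v where e: "e = (j, k)" and v: "v \<in> stage T st j" "prefix (v @ [k]) l"
    by (auto simp: stage_edge_paths_def edge_paths_def)
  then obtain w where "l = v @ k # w" by (auto simp: prefix_def)
  then show "e \<in> (\<lambda>i. (st (take i l), l ! i)) ` {..<length l}"
    using e v(1) by (auto simp: stage_def intro!: image_eqI[of _ _ "length v"])
next
  fix e assume "e \<in> (\<lambda>i. (st (take i l), l ! i)) ` {..<length l}"
  then obtain i where e: "e = (st (take i l), l ! i)" and i: "i < length l" by blast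
  have "take i l \<in> stage T st (st (take i l))"
    using l i take_in_situations by (simp add: stage_def leaves_def)
  moreover have "prefix (take i l @ [l ! i]) l"
    using i by (metis take_Suc_conv_app_nth take_is_prefix)
  ultimately show "e \<in> {(j, k). l \<in> stage_edge_paths j k}"
    using l e by (auto simp: stage_edge_paths_def edge_paths_def)
qed

lemma inj_on_stage_edges_of_path:
  assumes l: "l \<in> T"
  shows "inj_on (\<lambda>i. (st (take i l), l ! i)) {..<length l}"
proof (rule inj_onI)
  fix i i' assume i: "i \<in> {..<length l}" "i' \<in> {..<length l}"
    and same: "(st (take i l), l ! i) = (st (take i' l), l ! i')"
  have "take i l \<in> situations T" "take i' l \<in> situations T"
    using take_in_situations[OF l] i by auto
  then have "take i l \<in> stage T st (st (take i l))" "take i' l \<in> stage T st (st (take i l))"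
    using same by (simp_all add: stage_def)
  then have "take i l = take i' l" by (rule stage_prefix_unique) (rule take_is_prefix)+
  then have "length (take i l) = length (take i' l)" by (rule arg_cong)
  then show "i = i'" using i by simp
qed

lemma path_prob_eq_prod_stages:
  assumes l: "l \<in> leaves T"
  shows "path_prob st \<theta> l =
    (\<Prod>j\<in>stages T st. \<Prod>k<stage_deg T st j. if l \<in> stage_edge_paths j k then \<theta> j k else 1)"
proof -
  let ?E = "{(j, k). l \<in> stage_edge_paths j k}"
  let ?S = "SIGMA j:stages T st. {..<stage_deg T st j}"
  have "?S \<inter> ?E = ?E" using stage_edge_paths_label_less by blast
  have "path_prob st \<theta> l = prod (case_prod \<theta>) ?E"
    using l inj_on_stage_edges_of_path
    by (simp add: path_prob_def stage_edges_of_leaf prod.reindex leaves_def)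
  also have "\<dots> = prod (case_prod \<theta>) (?S \<inter> ?E)" using \<open>?S \<inter> ?E = ?E\<close> by simp
  also have "\<dots> = (\<Prod>e\<in>?S. if e \<in> ?E then case_prod \<theta> e else 1)"
    using finite_stages by (intro prod.inter_restrict) auto
  also have "\<dots> = (\<Prod>(j, k)\<in>?S. if l \<in> stage_edge_paths j k then \<theta> j k else 1)"
    by (rule prod.cong) auto
  also have "\<dots> = (\<Prod>j\<in>stages T st. \<Prod>k<stage_deg T st j. if l \<in> stage_edge_paths j k then \<theta> j k else 1)"
    by (subst prod.Sigma) (auto simp: finite_stages)
  finally show ?thesis .
qed

lemma count_n_eq_sum: "count_n T st N j k = (\<Sum>l\<in>stage_edge_paths j k. N l)"
proof -
  have "stage_edge_paths j k = {l \<in> leaves T. \<exists>v\<in>stage T st j. prefix (v @ [k]) l}"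
    by (auto simp: stage_edge_paths_def edge_paths_def)
  then show ?thesis by (simp add: count_n_def sum.inter_filter finite_leaves)
qed

lemma count_n_cong: "\<forall>l\<in>leaves T. N l = M l \<Longrightarrow> count_n T st N = count_n T st M"
  by (auto simp: count_n_def intro!: ext sum.cong)

lemma count_n_increment:
  "count_n T st (N(l0 := Suc (N l0))) j k =
    count_n T st N j k + (if l0 \<in> stage_edge_paths j k then 1 else 0)"
proof -
  have "(\<Sum>l\<in>stage_edge_paths j k. (N(l0 := Suc (N l0))) l)
      = (\<Sum>l\<in>stage_edge_paths j k. N l + (if l = l0 then 1 else 0))"
    by (intro sum.cong) auto
  then show ?thesis using finite_stage_edge_paths by (simp add: count_n_eq_sum sum.distrib)
qed

lemma BD_eq_prod_dirichlet_marginal: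
  "BD T st N a = (\<Prod>j\<in>stages T st. dirichlet_marginal {..<stage_deg T st j} (a j) (count_n T st N j))"
  by (simp add: BD_def dirichlet_marginal_def Let_def)

definition posterior_mean :: "(nat list \<Rightarrow> nat) \<Rightarrow> ('a \<Rightarrow> nat \<Rightarrow> real) \<Rightarrow> 'a \<Rightarrow> nat \<Rightarrow> real" where
  "posterior_mean N a j k = (a j k + real (count_n T st N j k)) /
     ((\<Sum>k<stage_deg T st j. a j k) + real (\<Sum>k<stage_deg T st j. count_n T st N j k))"

lemma dirichlet_marginal_stage_increment:
  assumes j: "j \<in> stages T st" and a: "\<forall>k<stage_deg T st j. a j k > 0"
  shows "dirichlet_marginal {..<stage_deg T st j} (a j) (count_n T st (N(l0 := Suc (N l0))) j) =
    dirichlet_marginal {..<stage_deg T st j} (a j) (count_n T st N j) *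
    (\<Prod>k<stage_deg T st j. if l0 \<in> stage_edge_paths j k then posterior_mean N a j k else 1)"
proof (cases "\<exists>k. l0 \<in> stage_edge_paths j k")
  case True
  then obtain k0 where k0: "l0 \<in> stage_edge_paths j k0" ..
  then have k0_less: "k0 < stage_deg T st j" by (rule stage_edge_paths_label_less)
  have passes_iff: "l0 \<in> stage_edge_paths j k \<longleftrightarrow> k = k0" for k
    using k0 stage_edge_paths_label_unique by blast
  have "count_n T st (N(l0 := Suc (N l0))) j = (count_n T st N j)(k0 := Suc (count_n T st N j k0))"
    by (rule ext) (simp add: count_n_increment passes_iff)
  then show ?thesis
    using k0_less a by (simp add: passes_iff dirichlet_marginal_increment posterior_mean_def)
next
  case False
  then have "count_n T st (N(l0 := Suc (N l0))) j = count_n T st N j"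
    by (intro ext) (simp add: count_n_increment)
  then show ?thesis using False by simp
qed

lemma BD_increment:
  assumes l0: "l0 \<in> leaves T" and a: "\<forall>j\<in>stages T st. \<forall>k<stage_deg T st j. a j k > 0"
  shows "BD T st (N(l0 := Suc (N l0))) a = BD T st N a * path_prob st (posterior_mean N a) l0"
  using a by (simp add: BD_eq_prod_dirichlet_marginal dirichlet_marginal_stage_increment
      prod.distrib path_prob_eq_prod_stages[OF l0])

definition edge_weight :: "(nat list \<Rightarrow> real) \<Rightarrow> 'a \<Rightarrow> nat \<Rightarrow> real" where
  "edge_weight c j k = (\<Sum>l\<in>stage_edge_paths j k. c l)"

definition mle_params :: "(nat list \<Rightarrow> real) \<Rightarrow> 'a \<Rightarrow> nat \<Rightarrow> real" where
  "mle_params c j k = edge_weight c j k / (\<Sum>k'<stage_deg T st j. edge_weight c j k')"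

definition mle_dist :: "(nat list \<Rightarrow> real) \<Rightarrow> nat list \<Rightarrow> real" where
  "mle_dist c = restrict (path_prob st (mle_params c)) (leaves T)"

lemma edge_weight_pos:
  assumes "\<forall>l\<in>leaves T. c l > 0" "j \<in> stages T st" "k < stage_deg T st j"
  shows "edge_weight c j k > 0"
  unfolding edge_weight_def
proof (rule sum_pos)
  show "finite (stage_edge_paths j k)" by (rule finite_stage_edge_paths)
  show "stage_edge_paths j k \<noteq> {}" using assms(2,3) by (rule stage_edge_paths_nonempty)
  show "\<And>l. l \<in> stage_edge_paths j k \<Longrightarrow> 0 < c l"
    using assms(1) stage_edge_paths_subset_leaves by blast
qed

lemma mle_params_valid:
  assumes "\<forall>l\<in>leaves T. c l > 0"
  shows "valid_params T st (mle_params c)"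
  unfolding valid_params_def
proof (intro ballI conjI allI impI)
  fix j assume j: "j \<in> stages T st"
  have total: "(\<Sum>k<stage_deg T st j. edge_weight c j k) > 0"
    using edge_weight_pos[OF assms j] stage_deg_pos[OF j] by (intro sum_pos) auto
  show "mle_params c j k > 0" if "k < stage_deg T st j" for k
    unfolding mle_params_def using edge_weight_pos[OF assms j that] total by simp
  show "(\<Sum>k<stage_deg T st j. mle_params c j k) = 1"
    unfolding mle_params_def using total by (simp flip: sum_divide_distrib)
qed

lemma mle_dist_in_model: "\<forall>l\<in>leaves T. c l > 0 \<Longrightarrow> mle_dist c \<in> model T st"
  unfolding mle_dist_def model_def using mle_params_valid by blast

lemma ln_path_prob:
  assumes \<theta>: "valid_params T st \<theta>" and l: "l \<in> leaves T"
  shows "ln (path_prob st \<theta> l) =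
    (\<Sum>j\<in>stages T st. \<Sum>k<stage_deg T st j. if l \<in> stage_edge_paths j k then ln (\<theta> j k) else 0)"
proof -
  have pos: "(if l \<in> stage_edge_paths j k then \<theta> j k else 1) > 0"
    if "j \<in> stages T st" "k < stage_deg T st j" for j k
    using \<theta> that by (simp add: valid_params_def)
  have "ln (path_prob st \<theta> l) =
      (\<Sum>j\<in>stages T st. ln (\<Prod>k<stage_deg T st j. if l \<in> stage_edge_paths j k then \<theta> j k else 1))"
    unfolding path_prob_eq_prod_stages[OF l] using pos finite_stages
    by (intro ln_prod) (auto intro!: prod_pos simp: less_imp_neq[symmetric])
  also have "\<dots> =
      (\<Sum>j\<in>stages T st. \<Sum>k<stage_deg T st j. ln (if l \<in> stage_edge_paths j k then \<theta> j k else 1))"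
    using pos by (intro sum.cong refl ln_prod) (auto simp: less_imp_neq[symmetric])
  finally have "ln (path_prob st \<theta> l) =
      (\<Sum>j\<in>stages T st. \<Sum>k<stage_deg T st j. ln (if l \<in> stage_edge_paths j k then \<theta> j k else 1))" .
  moreover have "ln (if b then x else 1) = (if b then ln x else 0)" for b and x :: real by simp
  ultimately show ?thesis by (simp only:)
qed

lemma log_likelihood_model:
  assumes \<theta>: "valid_params T st \<theta>"
  shows "log_likelihood (leaves T) c (restrict (path_prob st \<theta>) (leaves T)) =
    (\<Sum>j\<in>stages T st. \<Sum>k<stage_deg T st j. edge_weight c j k * ln (\<theta> j k))"
proof -
  have edge_sum: "(\<Sum>l\<in>leaves T. c l * (if l \<in> stage_edge_paths j k then ln (\<theta> j k) else 0)) =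
      edge_weight c j k * ln (\<theta> j k)" for j k
  proof -
    have "(\<Sum>l\<in>leaves T. c l * (if l \<in> stage_edge_paths j k then ln (\<theta> j k) else 0)) =
        (\<Sum>l\<in>leaves T. if l \<in> stage_edge_paths j k then c l * ln (\<theta> j k) else 0)"
      by (intro sum.cong) auto
    also have "\<dots> = (\<Sum>l\<in>{l \<in> leaves T. l \<in> stage_edge_paths j k}. c l * ln (\<theta> j k))"
      by (rule sum.inter_filter[OF finite_leaves, symmetric])
    also have "\<dots> = (\<Sum>l\<in>stage_edge_paths j k. c l * ln (\<theta> j k))"
      using stage_edge_paths_subset_leaves by (intro sum.cong) auto
    finally show ?thesis by (simp add: edge_weight_def sum_distrib_right)
  qed
  have "log_likelihood (leaves T) c (restrict (path_prob st \<theta>) (leaves T)) =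
      (\<Sum>l\<in>leaves T. \<Sum>j\<in>stages T st. \<Sum>k<stage_deg T st j.
        c l * (if l \<in> stage_edge_paths j k then ln (\<theta> j k) else 0))"
    unfolding log_likelihood_def
    by (intro sum.cong) (simp_all add: ln_path_prob[OF \<theta>] sum_distrib_left)
  also have "\<dots> = (\<Sum>j\<in>stages T st. \<Sum>k<stage_deg T st j. \<Sum>l\<in>leaves T.
      c l * (if l \<in> stage_edge_paths j k then ln (\<theta> j k) else 0))"
    by (subst sum.swap) (simp only: sum.swap[where A = "leaves T"])
  also have "\<dots> = (\<Sum>j\<in>stages T st. \<Sum>k<stage_deg T st j. edge_weight c j k * ln (\<theta> j k))"
    by (simp only: edge_sum)
  finally show ?thesis .
qed

lemma stage_log_likelihood_le:
  assumes c: "\<forall>l\<in>leaves T. c l > 0" and \<theta>: "valid_params T st \<theta>" and j: "j \<in> stages T st"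
  shows "(\<Sum>k<stage_deg T st j. edge_weight c j k * ln (\<theta> j k))
      \<le> (\<Sum>k<stage_deg T st j. edge_weight c j k * ln (mle_params c j k))"
    and "(\<Sum>k<stage_deg T st j. edge_weight c j k * ln (mle_params c j k))
      \<le> (\<Sum>k<stage_deg T st j. edge_weight c j k * ln (\<theta> j k))
      \<Longrightarrow> \<forall>k<stage_deg T st j. \<theta> j k = mle_params c j k"
proof -
  have w: "\<forall>k\<in>{..<stage_deg T st j}. edge_weight c j k > 0" using edge_weight_pos[OF c j] by blast
  have p: "\<forall>k\<in>{..<stage_deg T st j}. \<theta> j k > 0" "(\<Sum>k<stage_deg T st j. \<theta> j k) = 1"
    using \<theta> j by (auto simp: valid_params_def)
  note gibbs = gibbs_inequality[OF finite_lessThan w p]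
  show "(\<Sum>k<stage_deg T st j. edge_weight c j k * ln (\<theta> j k))
      \<le> (\<Sum>k<stage_deg T st j. edge_weight c j k * ln (mle_params c j k))"
    using gibbs(1) by (simp add: mle_params_def)
  show "\<forall>k<stage_deg T st j. \<theta> j k = mle_params c j k"
    if "(\<Sum>k<stage_deg T st j. edge_weight c j k * ln (mle_params c j k))
      \<le> (\<Sum>k<stage_deg T st j. edge_weight c j k * ln (\<theta> j k))"
    using gibbs(2) that by (simp add: mle_params_def)
qed

lemma mle_dist_maximal:
  assumes c: "\<forall>l\<in>leaves T. c l > 0" and p: "p \<in> model T st"
  shows "log_likelihood (leaves T) c p \<le> log_likelihood (leaves T) c (mle_dist c)"
proof -
  obtain \<theta> where p_eq: "p = restrict (path_prob st \<theta>) (leaves T)" and \<theta>: "valid_params T st \<theta>"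
    using p by (auto simp: model_def)
  show ?thesis
    unfolding p_eq mle_dist_def log_likelihood_model[OF \<theta>] log_likelihood_model[OF mle_params_valid[OF c]]
    using stage_log_likelihood_le(1)[OF c \<theta>] by (rule sum_mono)
qed

lemma mle_dist_unique:
  assumes c: "\<forall>l\<in>leaves T. c l > 0" and p: "p \<in> model T st"
    and le: "log_likelihood (leaves T) c (mle_dist c) \<le> log_likelihood (leaves T) c p"
  shows "p = mle_dist c"
proof -
  obtain \<theta> where p_eq: "p = restrict (path_prob st \<theta>) (leaves T)" and \<theta>: "valid_params T st \<theta>"
    using p by (auto simp: model_def)
  define G where "G \<theta>' j = (\<Sum>k<stage_deg T st j. edge_weight c j k * ln (\<theta>' j k))" for \<theta>' j
  have stage_le: "G \<theta> j \<le> G (mle_params c) j" if "j \<in> stages T st" for j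
    unfolding G_def using stage_log_likelihood_le(1)[OF c \<theta> that] .
  have "(\<Sum>j\<in>stages T st. G (mle_params c) j) \<le> (\<Sum>j\<in>stages T st. G \<theta> j)"
    using le unfolding p_eq mle_dist_def log_likelihood_model[OF \<theta>]
      log_likelihood_model[OF mle_params_valid[OF c]] G_def .
  then have "G (mle_params c) j \<le> G \<theta> j" if "j \<in> stages T st" for j
    using sum_strict_mono_ex1[OF finite_stages, of "G \<theta>" "G (mle_params c)"] stage_le that
    by (meson linorder_not_le)
  then have params: "\<theta> j k = mle_params c j k" if "j \<in> stages T st" "k < stage_deg T st j" for j k
    using stage_log_likelihood_le(2)[OF c \<theta>] that unfolding G_def by blast
  have "path_prob st \<theta> l = path_prob st (mle_params c) l" if "l \<in> leaves T" for l
    unfolding path_prob_eq_prod_stages[OF that] by (intro prod.cong refl) (simp add: params)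
  then show ?thesis unfolding p_eq mle_dist_def by (intro ext) simp
qed

definition pseudo_counts :: "real \<Rightarrow> (nat list \<Rightarrow> nat) \<Rightarrow> nat list \<Rightarrow> real" where
  "pseudo_counts \<alpha> N l = \<alpha> / real (card (leaves T)) + real (N l)"

lemma pseudo_counts_pos: "\<alpha> > 0 \<Longrightarrow> \<forall>l\<in>leaves T. pseudo_counts \<alpha> N l > 0"
  using finite_leaves leaves_nonempty by (simp add: pseudo_counts_def card_gt_0_iff add_pos_nonneg)

lemma BDepu_alpha_add_count_n:
  "BDepu_alpha T st \<alpha> j k + real (count_n T st N j k) = edge_weight (pseudo_counts \<alpha> N) j k"
  by (simp add: BDepu_alpha_def count_n_eq_sum edge_weight_def pseudo_counts_def sum.distrib
      flip: card_stage_edge_paths)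

lemma BDepu_alpha_pos:
  assumes "\<alpha> > 0"
  shows "\<forall>j\<in>stages T st. \<forall>k<stage_deg T st j. BDepu_alpha T st \<alpha> j k > 0"
proof (intro ballI allI impI)
  fix j k assume "j \<in> stages T st" "k < stage_deg T st j"
  then have "edge_weight (pseudo_counts \<alpha> (\<lambda>_. 0)) j k > 0"
    by (rule edge_weight_pos[OF pseudo_counts_pos[OF assms]])
  then show "BDepu_alpha T st \<alpha> j k > 0"
    using BDepu_alpha_add_count_n[of \<alpha> j k "\<lambda>_. 0"] by (simp add: count_n_eq_sum)
qed

lemma posterior_mean_BDepu_alpha:
  "posterior_mean N (BDepu_alpha T st \<alpha>) = mle_params (pseudo_counts \<alpha> N)"
proof (intro ext)
  fix j k
  have "(\<Sum>k<stage_deg T st j. BDepu_alpha T st \<alpha> j k) + real (\<Sum>k<stage_deg T st j. count_n T st N j k)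
      = (\<Sum>k<stage_deg T st j. edge_weight (pseudo_counts \<alpha> N) j k)"
    by (simp add: sum.distrib[symmetric] BDepu_alpha_add_count_n)
  then show "posterior_mean N (BDepu_alpha T st \<alpha>) j k = mle_params (pseudo_counts \<alpha> N) j k"
    by (simp add: posterior_mean_def mle_params_def BDepu_alpha_add_count_n)
qed

lemma BDepu_increment:
  assumes "l0 \<in> leaves T" and "\<alpha> > 0"
  shows "BDepu T st (N(l0 := Suc (N l0))) \<alpha> = BDepu T st N \<alpha> * mle_dist (pseudo_counts \<alpha> N) l0"
  using BD_increment[OF assms(1) BDepu_alpha_pos[OF assms(2)]] assms(1)
  by (simp add: BDepu_def mle_dist_def posterior_mean_BDepu_alpha)

lemma BDepu_zero:
  assumes N: "\<forall>l\<in>leaves T. N l = 0" and "\<alpha> > 0"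
  shows "BDepu T st N \<alpha> = 1"
proof -
  have "count_n T st N j = (\<lambda>_. 0)" for j
    using N by (auto simp: count_n_def intro!: ext sum.neutral)
  moreover have "dirichlet_marginal {..<stage_deg T st j} (BDepu_alpha T st \<alpha> j) (\<lambda>_. 0) = 1"
    if "j \<in> stages T st" for j
    using BDepu_alpha_pos[OF \<open>\<alpha> > 0\<close>] stage_deg_pos[OF that] that
    by (intro dirichlet_marginal_zero) auto
  ultimately show ?thesis by (simp add: BDepu_def BD_eq_prod_dirichlet_marginal)
qed

lemma BDepu_cong:
  assumes "\<forall>l\<in>leaves T. N l = M l"
  shows "BDepu T st N \<alpha> = BDepu T st M \<alpha>"
  using count_n_cong[OF assms] by (simp add: BDepu_def BD_def)

end

lemma mle_dist_stat_equiv: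
  assumes A: "square_free_staged_tree T st" and B: "square_free_staged_tree T' st'"
    and equiv: "stat_equiv T st T' st' \<phi>"
    and c: "\<forall>l\<in>leaves T. c l > 0" and c': "\<forall>l\<in>leaves T. c' (\<phi> l) = c l"
  shows "square_free_staged_tree.mle_dist T st c =
    restrict (square_free_staged_tree.mle_dist T' st' c' \<circ> \<phi>) (leaves T)"
proof -
  interpret A: square_free_staged_tree T st by (rule A)
  interpret B: square_free_staged_tree T' st' by (rule B)
  have bij: "bij_betw \<phi> (leaves T) (leaves T')"
    and model: "model T st = (\<lambda>q. restrict (q \<circ> \<phi>) (leaves T)) ` model T' st'"
    using equiv by (simp_all add: stat_equiv_def)
  have c'_pos: "\<forall>l\<in>leaves T'. c' l > 0"
  proof
    fix y assume "y \<in> leaves T'"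
    then obtain x where "x \<in> leaves T" "y = \<phi> x" using bij by (auto simp: bij_betw_def)
    then show "c' y > 0" using c c' by simp
  qed
  have LL: "log_likelihood (leaves T) c (restrict (q \<circ> \<phi>) (leaves T)) = log_likelihood (leaves T') c' q" for q
    using bij c' by (rule log_likelihood_reindex)
  have "A.mle_dist c \<in> (\<lambda>q. restrict (q \<circ> \<phi>) (leaves T)) ` model T' st'"
    using A.mle_dist_in_model[OF c] unfolding model .
  then obtain r where r: "r \<in> model T' st'" and mle_eq: "A.mle_dist c = restrict (r \<circ> \<phi>) (leaves T)"
    by (rule imageE)
  have transported_mle: "restrict (B.mle_dist c' \<circ> \<phi>) (leaves T) \<in> model T st"
    unfolding model using B.mle_dist_in_model[OF c'_pos] by (rule imageI)
  have "log_likelihood (leaves T) c (A.mle_dist c) = log_likelihood (leaves T') c' r"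
    unfolding mle_eq by (rule LL)
  also have "\<dots> \<le> log_likelihood (leaves T') c' (B.mle_dist c')"
    by (rule B.mle_dist_maximal[OF c'_pos r])
  also have "\<dots> = log_likelihood (leaves T) c (restrict (B.mle_dist c' \<circ> \<phi>) (leaves T))"
    by (rule LL[symmetric])
  finally have "restrict (B.mle_dist c' \<circ> \<phi>) (leaves T) = A.mle_dist c"
    by (rule A.mle_dist_unique[OF c transported_mle])
  then show ?thesis by (rule sym)
qed

lemma mle_dist_pseudo_counts_stat_equiv:
  assumes A: "square_free_staged_tree T st" and B: "square_free_staged_tree T' st'"
    and equiv: "stat_equiv T st T' st' \<phi>" and "\<alpha> > 0"
    and N: "\<forall>l\<in>leaves T. N' (\<phi> l) = N l" and l: "l \<in> leaves T"
  shows "square_free_staged_tree.mle_dist T st (square_free_staged_tree.pseudo_counts T \<alpha> N) l =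
    square_free_staged_tree.mle_dist T' st' (square_free_staged_tree.pseudo_counts T' \<alpha> N') (\<phi> l)"
proof -
  interpret A: square_free_staged_tree T st by (rule A)
  interpret B: square_free_staged_tree T' st' by (rule B)
  have "card (leaves T') = card (leaves T)"
    using equiv bij_betw_same_card by (force simp: stat_equiv_def)
  then have "\<forall>x\<in>leaves T. B.pseudo_counts \<alpha> N' (\<phi> x) = A.pseudo_counts \<alpha> N x"
    using N by (simp add: A.pseudo_counts_def B.pseudo_counts_def)
  then show ?thesis
    using mle_dist_stat_equiv[OF A B equiv A.pseudo_counts_pos[OF \<open>\<alpha> > 0\<close>]] l by simp
qed

lemma inv_into_fun_upd_comp:
  assumes "bij_betw \<phi> L L'" "l \<in> L"
  shows "\<forall>y\<in>L'. (M(l := Suc (M l)) \<circ> inv_into L \<phi>) y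
    = ((M \<circ> inv_into L \<phi>)(\<phi> l := Suc ((M \<circ> inv_into L \<phi>) (\<phi> l)))) y"
proof
  fix y assume "y \<in> L'"
  then have "inv_into L \<phi> y = l \<longleftrightarrow> y = \<phi> l"
    using assms by (metis bij_betw_inv_into_left bij_betw_inv_into_right)
  then show "(M(l := Suc (M l)) \<circ> inv_into L \<phi>) y
    = ((M \<circ> inv_into L \<phi>)(\<phi> l := Suc ((M \<circ> inv_into L \<phi>) (\<phi> l)))) y"
    using assms by (simp add: bij_betw_inv_into_left)
qed

lemma BDepu_stat_equiv_inv_into:
  assumes A: "square_free_staged_tree T st" and B: "square_free_staged_tree T' st'"
    and equiv: "stat_equiv T st T' st' \<phi>" and "\<alpha> > 0"
  shows "BDepu T st M \<alpha> = BDepu T' st' (M \<circ> inv_into (leaves T) \<phi>) \<alpha>"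
proof -
  interpret A: square_free_staged_tree T st by (rule A)
  interpret B: square_free_staged_tree T' st' by (rule B)
  have bij: "bij_betw \<phi> (leaves T) (leaves T')" using equiv by (simp add: stat_equiv_def)
  let ?\<psi> = "inv_into (leaves T) \<phi>"
  show ?thesis
    using A.finite_leaves
  proof (induction M rule: nat_fun_increment_induct)
    case (zero M)
    then have "\<forall>y\<in>leaves T'. (M \<circ> ?\<psi>) y = 0"
      using bij by (auto intro: bij_betw_apply bij_betw_inv_into)
    then show ?case using A.BDepu_zero[OF zero \<open>\<alpha> > 0\<close>] B.BDepu_zero[OF _ \<open>\<alpha> > 0\<close>] by simp
  next
    case (increment M l)
    have l': "\<phi> l \<in> leaves T'" using bij increment.hyps by (rule bij_betw_apply)
    have "BDepu T' st' (M(l := Suc (M l)) \<circ> ?\<psi>) \<alpha>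
        = BDepu T' st' ((M \<circ> ?\<psi>)(\<phi> l := Suc ((M \<circ> ?\<psi>) (\<phi> l)))) \<alpha>"
      using inv_into_fun_upd_comp[OF bij increment.hyps] by (rule B.BDepu_cong)
    also have "\<dots> = BDepu T' st' (M \<circ> ?\<psi>) \<alpha> * B.mle_dist (B.pseudo_counts \<alpha> (M \<circ> ?\<psi>)) (\<phi> l)"
      by (rule B.BDepu_increment[OF l' \<open>\<alpha> > 0\<close>])
    also have "\<dots> = BDepu T st M \<alpha> * A.mle_dist (A.pseudo_counts \<alpha> M) l"
    proof -
      have "A.mle_dist (A.pseudo_counts \<alpha> M) l = B.mle_dist (B.pseudo_counts \<alpha> (M \<circ> ?\<psi>)) (\<phi> l)"
        using bij by (intro mle_dist_pseudo_counts_stat_equiv[OF A B equiv \<open>\<alpha> > 0\<close> _ increment.hyps])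
          (simp add: bij_betw_inv_into_left)
      then show ?thesis by (simp only: increment.IH)
    qed
    finally show ?case by (simp only: A.BDepu_increment[OF increment.hyps \<open>\<alpha> > 0\<close>])
  qed
qed

theorem theorem1:
  fixes T :: "nat list set" and st :: "nat list \<Rightarrow> 'a"
    and T' :: "nat list set" and st' :: "nat list \<Rightarrow> 'b"
    and \<phi> :: "nat list \<Rightarrow> nat list"
    and N N' :: "nat list \<Rightarrow> nat" and \<alpha> :: real
  assumes "staged_tree T st" and "staged_tree T' st'"
    and "square_free T st" and "square_free T' st'"
    and "stat_equiv T st T' st' \<phi>"
    and "\<alpha> > 0"
    and "\<forall>l \<in> leaves T. N' (\<phi> l) = N l"
  shows "BDepu T st N \<alpha> = BDepu T' st' N' \<alpha>"
proof -
  have A: "square_free_staged_tree T st" and B: "square_free_staged_tree T' st'"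
    using assms(1-4) by (simp_all add: square_free_staged_tree_def)
  have bij: "bij_betw \<phi> (leaves T) (leaves T')" using assms(5) by (simp add: stat_equiv_def)
  have "BDepu T' st' N' \<alpha> = BDepu T' st' (N \<circ> inv_into (leaves T) \<phi>) \<alpha>"
  proof (rule square_free_staged_tree.BDepu_cong[OF B], intro ballI)
    fix y assume y: "y \<in> leaves T'"
    then have "inv_into (leaves T) \<phi> y \<in> leaves T" "\<phi> (inv_into (leaves T) \<phi> y) = y"
      using bij by (auto intro: bij_betw_apply bij_betw_inv_into bij_betw_inv_into_right)
    then show "N' y = (N \<circ> inv_into (leaves T) \<phi>) y" using assms(7) by (metis comp_apply)
  qed
  then show ?thesis using BDepu_stat_equiv_inv_into[OF A B assms(5,6)] by simp
qed

end
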